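(* Let $\mathcal{H}_A$ have orthonormal basis $\ket{1},\ldots,\ket{N}$ and $\mathcal{H}_R$ be a finite-dimensional Hilbert space. Fix $i$ and a unitary $U$ on $\mathcal{H}_R$, and let $O_i$ be the unitary on $\mathcal{H}_A\otimes\mathcal{H}_R$ with $O_i\ket{i}\otimes\ket{w}=\ket{i}\otimes\ket{Uw}$ and $O_i\ket{j}\otimes\ket{w}=\ket{j}\otimes\ket{w}$ for $j\neq i$; assume $O_i$ is self-adjoint. For $p\in[0,1]$ let $\mathcal{F}_i^p(\rho)=(1-p)\rho+p\,O_i\rho O_i^\dagger$, and let $P_i=\ket{i}\bra{i}\otimes\mathrm{Id}$. Let $0<\eta<1$. Then for all density matrices $\rho,\sigma$ on $\mathcal{H}_A\otimes\mathcal{H}_R$ and all $p,q\in[\eta,1-\eta]$, $$\sqrt{F}(\mathcal{F}_i^p(\rho),\mathcal{F}_i^q(\sigma))\geq\sqrt{F}(\rho,\sigma)-\frac{(p-q)^2}{\eta(1-\eta)}\sqrt{\mathrm{tr}(P_i\rho)\,\mathrm{tr}(P_i\sigma)}.$$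
   Context: For density matrices $\rho,\sigma$ the (root) fidelity is $\sqrt{F}(\rho,\sigma)=\mathrm{tr}\sqrt{\rho^{1/2}\sigma\rho^{1/2}}$. *)

theory Defs
  imports "HOL-Analysis.Analysis"
begin

text \<open>Operators on a finite-dimensional complex Hilbert space with orthonormal basis
  indexed by a finite type are represented as complex square matrices in that basis.
  H_A has basis indexed by the finite type 'a (N = CARD('a)); H_R has basis indexed by
  the finite type 'r; H_A tensor H_R has basis indexed by 'a * 'r, the basis vector
  (j,w) being the product vector of basis vector j and basis vector w.\<close>

definition adj :: "complex^'n^'n \<Rightarrow> complex^'n^'n" where
  "adj A = (\<chi> i j. cnj (A $ j $ i))"

definition hermitian :: "complex^'n^'n \<Rightarrow> bool" where
  "hermitian A \<longleftrightarrow> adj A = A"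

definition unitary :: "complex^'n^'n \<Rightarrow> bool" where
  "unitary U \<longleftrightarrow> adj U ** U = mat 1 \<and> U ** adj U = mat 1"

definition cinner :: "complex^'n \<Rightarrow> complex^'n \<Rightarrow> complex" where
  "cinner v w = (\<Sum>i\<in>UNIV. cnj (v $ i) * w $ i)"

definition psd :: "complex^'n^'n \<Rightarrow> bool" where
  "psd A \<longleftrightarrow> hermitian A \<and>
     (\<forall>v. Im (cinner v (A *v v)) = 0 \<and> Re (cinner v (A *v v)) \<ge> 0)"

definition density :: "complex^'n^'n \<Rightarrow> bool" where
  "density \<rho> \<longleftrightarrow> psd \<rho> \<and> trace \<rho> = 1"

definition msqrt :: "complex^'n^'n \<Rightarrow> complex^'n^'n" where
  "msqrt A = (THE B. psd B \<and> B ** B = A)"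

definition sqrt_fidelity :: "complex^'n^'n \<Rightarrow> complex^'n^'n \<Rightarrow> real" where
  "sqrt_fidelity \<rho> \<sigma> = Re (trace (msqrt (msqrt \<rho> ** \<sigma> ** msqrt \<rho>)))"

definition ctrl_op :: "'a::finite \<Rightarrow> complex^'r::finite^'r \<Rightarrow> complex^('a \<times> 'r)^('a \<times> 'r)" where
  "ctrl_op i U = (\<chi> a b. if fst a = fst b then (if fst a = i then U $ snd a $ snd b else (if snd a = snd b then 1 else 0)) else 0)"

definition proj_i :: "'a::finite \<Rightarrow> complex^('a \<times> 'r::finite)^('a \<times> 'r)" where
  "proj_i i = (\<chi> a b. if fst a = i \<and> fst b = i \<and> snd a = snd b then 1 else 0)"

definition chan :: "'a::finite \<Rightarrow> complex^'r::finite^'r \<Rightarrow> real \<Rightarrow> complex^('a \<times> 'r)^('a \<times> 'r) \<Rightarrow> complex^('a \<times> 'r)^('a \<times> 'r)" where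
  "chan i U p \<rho> = (1 - p) *\<^sub>R \<rho> + p *\<^sub>R (ctrl_op i U ** \<rho> ** adj (ctrl_op i U))"

end

theory Submission
  imports Defs
begin

text \<open>The root fidelity is the value of a semidefinite program: \<open>sqrt_fidelity \<rho> \<sigma>\<close> is the
  largest \<open>Re (trace X)\<close> with \<open>block_psd \<rho> X \<sigma>\<close>.  Every such \<open>X\<close> has the form
  \<open>\<rho>\<^sup>1\<^sup>/\<^sup>2 K \<sigma>\<^sup>1\<^sup>/\<^sup>2\<close> with \<open>K\<close> a contraction, so \<open>Re (trace X)\<close> is at most the trace norm of
  \<open>\<sigma>\<^sup>1\<^sup>/\<^sup>2 \<rho>\<^sup>1\<^sup>/\<^sup>2\<close>, and the polar decomposition of that operator yields an \<open>X\<close> attaining it.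

  Feasibility survives Kraus operators acting on both sides: if \<open>A\<^sub>k\<close> and \<open>B\<^sub>k\<close> are Kraus
  operators of two channels, then \<open>\<Sum> A\<^sub>k X B\<^sub>k\<^sup>\<dagger>\<close> is feasible for the two output states.  With
  \<open>p = sin\<^sup>2 \<theta>\<close> and \<open>q = sin\<^sup>2 \<phi>\<close>, the first channel has Kraus operators \<open>cos \<theta>\<close> and \<open>sin \<theta> O\<close>,
  and for the second we take the pair \<open>(cos \<phi>, sin \<phi> O)\<close> rotated through \<open>\<theta> - \<phi>\<close>.  As \<open>O\<^sup>2 = 1\<close>,
  the trace of the new feasible point is \<open>tr X - sin\<^sup>2 (\<theta> - \<phi>) tr ((1 - O) X)\<close>.  Since
  \<open>1 - O = P (1 - O)\<close>, the Cauchy-Schwarz inequality for positive block operators bounds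
  \<open>|tr ((1 - O) X)|\<close> by \<open>2 (tr (P \<rho>) tr (P \<sigma>))\<^sup>1\<^sup>/\<^sup>2\<close>, and
  \<open>sin\<^sup>2 (\<theta> - \<phi>) \<le> (p - q)\<^sup>2 / (2 \<eta> (1 - \<eta>))\<close> for \<open>p, q \<in> [\<eta>, 1 - \<eta>]\<close>.\<close>

section \<open>Adjoints, the standard inner product and positivity\<close>

lemma adj_nth [simp]: "adj A $ i $ j = cnj (A $ j $ i)"
  by (simp add: adj_def)

lemma adj_adj [simp]: "adj (adj A) = A"
  by (simp add: adj_def vec_eq_iff)

lemma adj_mult: "adj (A ** B) = adj B ** adj A"
  by (simp add: vec_eq_iff matrix_matrix_mult_def mult.commute)

lemma adj_add: "adj (A + B) = adj A + adj B"
  by (simp add: vec_eq_iff)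

lemma adj_diff: "adj (A - B) = adj A - adj B"
  by (simp add: vec_eq_iff)

lemma adj_scaleR: "adj (c *\<^sub>R A) = c *\<^sub>R adj A"
  by (simp add: vec_eq_iff complex_cnj_scaleR)

lemma adj_mat_1 [simp]: "adj (mat 1) = mat 1"
  by (simp add: vec_eq_iff mat_def)

lemma adj_0 [simp]: "adj 0 = 0"
  by (simp add: vec_eq_iff)

lemma matrix_add_rdistrib: "(B + C) ** A = B ** A + C ** A"
  by (simp add: matrix_matrix_mult_def vec_eq_iff distrib_right sum.distrib)

lemma matrix_diff_rdistrib: "(B - C) ** (A::'a::ring_1^'n^'m) = B ** A - C ** A"
  by (simp add: matrix_matrix_mult_def vec_eq_iff left_diff_distrib sum_subtractf)

lemma matrix_diff_ldistrib: "(A::'a::ring_1^'n^'m) ** (B - C) = A ** B - A ** C"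
  by (simp add: matrix_matrix_mult_def vec_eq_iff right_diff_distrib sum_subtractf)

lemma scaleR_matrix_mult: "(c *\<^sub>R B) ** (A::'a::real_algebra_1^'n^'m) = c *\<^sub>R (B ** A)"
  by (simp add: matrix_matrix_mult_def vec_eq_iff scaleR_sum_right)

lemma matrix_mult_scaleR: "(A::'a::real_algebra_1^'n^'m) ** (c *\<^sub>R B) = c *\<^sub>R (A ** B)"
  by (simp add: matrix_matrix_mult_def vec_eq_iff scaleR_sum_right)

lemma matrix_vector_mult_scale: "(A::'a::comm_semiring_1^'n^'m) *v (s *s x) = s *s (A *v x)"
  by (simp add: matrix_vector_mult_def vec_eq_iff sum_distrib_left mult_ac)

lemma matrix_vector_mult_scaleR_right: "(A::'a::real_algebra_1^'n^'m) *v (c *\<^sub>R x) = c *\<^sub>R (A *v x)"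
  by (simp add: matrix_vector_mult_def vec_eq_iff scaleR_sum_right)

lemma matrix_vector_mult_axis: "(A *v axis j 1) $ i = A $ i $ j"
proof -
  have "(\<lambda>k. A $ i $ k * axis j 1 $ k) = (\<lambda>k. if k = j then A $ i $ k else 0)"
    by (auto simp: axis_def)
  then show ?thesis
    by (simp only: matrix_vector_mult_def vec_lambda_beta) simp
qed

lemma trace_scaleR: "trace (c *\<^sub>R (A::'a::real_algebra_1^'n^'n)) = of_real c * trace A"
  unfolding trace_def vector_scaleR_component by (simp add: scaleR_conv_of_real sum_distrib_left)

lemma cinner_matrix_right: "cinner u (A *v v) = cinner (adj A *v u) v"
  unfolding cinner_def matrix_vector_mult_def
  by (simp add: sum_distrib_left sum_distrib_right mult_ac, subst sum.swap, simp)

lemma cinner_matrix_left: "cinner (A *v u) v = cinner u (adj A *v v)"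
  by (simp add: cinner_matrix_right)

lemma cinner_commute: "cinner v u = cnj (cinner u v)"
  by (simp add: cinner_def mult.commute)

lemma cinner_add_right: "cinner u (v + w) = cinner u v + cinner u w"
  by (simp add: cinner_def algebra_simps sum.distrib)

lemma cinner_add_left: "cinner (v + w) u = cinner v u + cinner w u"
  by (simp add: cinner_def algebra_simps sum.distrib)

lemma cinner_diff_right: "cinner u (v - w) = cinner u v - cinner u w"
  by (simp add: cinner_def algebra_simps sum_subtractf)

lemma cinner_scale_right: "cinner u (c *s v) = c * cinner u v"
  by (simp add: cinner_def sum_distrib_left mult_ac)

lemma cinner_scale_left: "cinner (c *s u) v = cnj c * cinner u v"
  by (simp add: cinner_def sum_distrib_left mult_ac)

lemma cinner_scaleR_right: "cinner u (c *\<^sub>R v) = of_real c * cinner u v"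
  unfolding cinner_def vector_scaleR_component by (simp add: sum_distrib_left mult_ac scaleR_conv_of_real)

lemma cinner_scaleR_left: "cinner (c *\<^sub>R u) v = of_real c * cinner u v"
  unfolding cinner_def vector_scaleR_component by (simp add: sum_distrib_left mult_ac scaleR_conv_of_real)

lemma cinner_zero_left [simp]: "cinner 0 v = 0"
  by (simp add: cinner_def)

lemma cinner_zero_right [simp]: "cinner v 0 = 0"
  by (simp add: cinner_def)

lemma Re_cinner: "Re (cinner u v) = inner u v"
  by (simp add: cinner_def inner_vec_def Re_sum inner_complex_def)

lemma cnj_mult_self: "cnj z * z = of_real (cmod z ^ 2)"
  by (metis complex_norm_square mult.commute of_real_power)

lemma cinner_self: "cinner u u = of_real (norm u ^ 2)"
proof -
  have "cinner u u = of_real (\<Sum>i\<in>UNIV. cmod (u $ i) ^ 2)"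
    by (simp add: cinner_def cnj_mult_self)
  also have "\<dots> = of_real (norm u ^ 2)"
    by (simp add: norm_vec_def L2_set_def sum_nonneg)
  finally show ?thesis .
qed

lemma cinner_axis_left: "cinner (axis i 1) v = v $ i"
proof -
  have "(\<lambda>j. cnj (axis i 1 $ j) * v $ j) = (\<lambda>j. if j = i then v $ j else 0)"
    by (auto simp: axis_def)
  then show ?thesis
    by (simp only: cinner_def) simp
qed

lemma cinner_axis_axis: "cinner (axis k 1) (axis j 1) = (if k = j then 1 else 0)"
  unfolding cinner_axis_left by (simp add: axis_def)

lemma matrix_eq_cinnerI:
  assumes "\<And>u v. cinner u (A *v v) = cinner u (B *v v)"
  shows "A = B"
  using assms[of "axis _ 1" "axis _ 1"]
  by (simp add: vec_eq_iff cinner_axis_left matrix_vector_mult_axis)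

lemma cinner_sandwich: "cinner u ((A ** M ** adj B) *v v) = cinner (adj A *v u) (M *v (adj B *v v))"
  by (simp add: cinner_matrix_right flip: matrix_vector_mul_assoc)

lemma sandwich_diagonal_entry:
  "(A ** M ** adj B) $ k $ k = cinner (adj A *v axis k 1) (M *v (adj B *v axis k 1))"
  by (simp add: cinner_sandwich [symmetric] cinner_axis_left matrix_vector_mult_axis)

lemma Im_cinner_hermitian:
  assumes "hermitian A"
  shows "Im (cinner v (A *v v)) = 0"
proof -
  have "cinner v (A *v v) = cnj (cinner v (A *v v))"
    using assms cinner_commute [of "A *v v" v] by (simp add: cinner_matrix_right hermitian_def)
  then show ?thesis
    by (metis Reals_cnj_iff complex_is_Real_iff)
qed

lemma hermitian_mat_1: "hermitian (mat 1)"
  by (simp add: hermitian_def)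

lemma Re_cinner_add_hermitian:
  assumes "hermitian A"
  shows "Re (cinner (v + w) (A *v (v + w)))
    = Re (cinner v (A *v v)) + 2 * Re (cinner v (A *v w)) + Re (cinner w (A *v w))"
proof -
  have "cinner w (A *v v) = cnj (cinner v (A *v w))"
    using assms cinner_commute [of "A *v w" v] by (simp add: cinner_matrix_right hermitian_def)
  then show ?thesis
    by (simp add: cinner_add_left cinner_add_right matrix_vector_right_distrib)
qed

lemma psdI:
  assumes "hermitian A" "\<And>v. Re (cinner v (A *v v)) \<ge> 0"
  shows "psd A"
  using assms Im_cinner_hermitian unfolding psd_def by blast

lemma adj_psd: "psd A \<Longrightarrow> adj A = A"
  by (simp add: psd_def hermitian_def)

lemma psd_form_nonneg: "psd A \<Longrightarrow> Re (cinner v (A *v v)) \<ge> 0"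
  by (simp add: psd_def)

lemma psd_adj_mult_self: "psd (adj Z ** Z)"
proof (rule psdI)
  show "hermitian (adj Z ** Z)"
    by (simp add: hermitian_def adj_mult)
  have "cinner v ((adj Z ** Z) *v v) = cinner (Z *v v) (Z *v v)" for v
    by (simp add: cinner_matrix_right flip: matrix_vector_mul_assoc)
  then show "Re (cinner v ((adj Z ** Z) *v v)) \<ge> 0" for v
    by (simp add: cinner_self)
qed

lemma unitary_mult:
  assumes "unitary A" "unitary B"
  shows "unitary (A ** B)"
proof -
  have "adj (A ** B) ** (A ** B) = adj B ** (adj A ** A) ** B"
    and "(A ** B) ** adj (A ** B) = A ** (B ** adj B) ** adj A"
    by (simp_all add: adj_mult matrix_mul_assoc)
  with assms show ?thesis
    by (simp add: unitary_def)
qed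

lemma unitary_adj: "unitary A \<Longrightarrow> unitary (adj A)"
  by (simp add: unitary_def)

lemma unitary_cancel_left: "unitary V \<Longrightarrow> adj V *v (V *v x) = x"
  by (simp add: matrix_vector_mul_assoc unitary_def)

lemma cinner_unitary: "unitary V \<Longrightarrow> cinner (V *v x) (V *v y) = cinner x y"
  by (simp add: cinner_matrix_left unitary_cancel_left)

lemma norm_unitary_axis:
  assumes "unitary V"
  shows "norm (V *v axis k 1) = 1"
proof -
  have "cinner (V *v axis k 1) (V *v axis k 1) = 1"
    by (simp add: cinner_unitary [OF assms] cinner_axis_axis)
  then have "norm (V *v axis k 1) ^ 2 = 1"
    by (metis cinner_self of_real_eq_1_iff)
  then show ?thesis
    by (smt (verit) norm_ge_zero power2_eq_1_iff)
qed

section \<open>Operators diagonal in an orthonormal basis\<close>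

definition diag_mat :: "('n::finite \<Rightarrow> complex) \<Rightarrow> complex^'n^'n" where
  "diag_mat a = (\<chi> i j. if i = j then a i else 0)"

definition diag_in :: "complex^'n^'n \<Rightarrow> ('n::finite \<Rightarrow> complex) \<Rightarrow> complex^'n^'n" where
  "diag_in V a = V ** diag_mat a ** adj V"

lemma matrix_mult_diag_mat: "A ** diag_mat a = (\<chi> i j. A $ i $ j * a j)"
proof -
  have "(\<Sum>k\<in>UNIV. A $ i $ k * (if k = j then a k else 0)) = A $ i $ j * a j" for i j
  proof -
    have "(\<lambda>k. A $ i $ k * (if k = j then a k else 0)) = (\<lambda>k. if k = j then A $ i $ j * a j else 0)"
      by auto
    then show ?thesis
      by (simp only:) simp
  qed
  then show ?thesis
    by (simp add: diag_mat_def matrix_matrix_mult_def vec_eq_iff)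
qed

lemma diag_mat_mult_matrix: "diag_mat a ** A = (\<chi> i j. a i * A $ i $ j)"
proof -
  have "(\<Sum>k\<in>UNIV. (if i = k then a i else 0) * A $ k $ j) = a i * A $ i $ j" for i j
  proof -
    have "(\<lambda>k. (if i = k then a i else 0) * A $ k $ j) = (\<lambda>k. if k = i then a i * A $ i $ j else 0)"
      by auto
    then show ?thesis
      by (simp only:) simp
  qed
  then show ?thesis
    by (simp add: diag_mat_def matrix_matrix_mult_def vec_eq_iff)
qed

lemma diag_mat_mult: "diag_mat a ** diag_mat b = diag_mat (\<lambda>j. a j * b j)"
  by (simp add: matrix_mult_diag_mat) (auto simp: diag_mat_def vec_eq_iff)

lemma adj_diag_mat: "adj (diag_mat a) = diag_mat (\<lambda>j. cnj (a j))"
  by (auto simp: diag_mat_def vec_eq_iff)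

lemma diag_mat_vec_nth: "(diag_mat a *v x) $ j = a j * x $ j"
proof -
  have "(\<lambda>k. diag_mat a $ j $ k * x $ k) = (\<lambda>k. if k = j then a j * x $ j else 0)"
    by (auto simp: diag_mat_def)
  then show ?thesis
    by (simp only: matrix_vector_mult_def vec_lambda_beta) simp
qed

lemma diag_in_cong: "(\<And>j. a j = b j) \<Longrightarrow> diag_in V a = diag_in V b"
  by (metis ext)

lemma diag_in_mult:
  assumes "unitary V"
  shows "diag_in V a ** diag_in V b = diag_in V (\<lambda>j. a j * b j)"
proof -
  have "diag_in V a ** diag_in V b = V ** diag_mat a ** (adj V ** V) ** diag_mat b ** adj V"
    by (simp add: diag_in_def matrix_mul_assoc)
  also have "\<dots> = V ** (diag_mat a ** diag_mat b) ** adj V"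
    using assms by (simp add: unitary_def matrix_mul_assoc)
  finally show ?thesis
    by (simp add: diag_mat_mult diag_in_def)
qed

lemma diag_in_diff: "diag_in V a - diag_in V b = diag_in V (\<lambda>j. a j - b j)"
proof -
  have "diag_mat a - diag_mat b = diag_mat (\<lambda>j. a j - b j)"
    by (simp add: diag_mat_def vec_eq_iff)
  then show ?thesis
    by (simp add: diag_in_def matrix_diff_ldistrib matrix_diff_rdistrib flip: \<open>_ = diag_mat _\<close>)
qed

lemma diag_in_1:
  assumes "unitary V"
  shows "diag_in V (\<lambda>_. 1) = mat 1"
proof -
  have d: "diag_mat (\<lambda>_. 1) = mat 1"
    by (simp add: diag_mat_def mat_def vec_eq_iff)
  show ?thesis
    unfolding diag_in_def d using assms by (simp add: unitary_def)
qed

lemma diag_in_0: "diag_in V (\<lambda>_. 0) = 0"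
proof -
  have d: "diag_mat (\<lambda>_. 0) = 0"
    by (simp add: diag_mat_def vec_eq_iff)
  show ?thesis
    unfolding diag_in_def d by simp
qed

lemma adj_diag_in: "adj (diag_in V a) = diag_in V (\<lambda>j. cnj (a j))"
  by (simp add: diag_in_def adj_mult adj_diag_mat matrix_mul_assoc)

lemma trace_diag_in:
  assumes "unitary V"
  shows "trace (diag_in V a) = sum a UNIV"
proof -
  have "trace (diag_in V a) = trace ((diag_mat a ** adj V) ** V)"
    unfolding diag_in_def by (metis matrix_mul_assoc trace_mul_sym)
  also have "\<dots> = trace (diag_mat a)"
    using assms by (simp add: unitary_def flip: matrix_mul_assoc)
  finally show ?thesis
    by (simp add: diag_mat_def trace_def)
qed

lemma diag_in_axis:
  assumes "unitary V"
  shows "diag_in V a *v (V *v axis k 1) = a k *s (V *v axis k 1)"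
proof -
  have "diag_mat a *v axis k 1 = a k *s axis k 1"
    by (simp add: vec_eq_iff diag_mat_vec_nth axis_def)
  then show ?thesis
    by (simp add: diag_in_def unitary_cancel_left [OF assms] matrix_vector_mult_scale
        flip: matrix_vector_mul_assoc)
qed

lemma cinner_diag_in:
  "cinner u (diag_in V a *v u) = (\<Sum>j\<in>UNIV. a j * of_real (cmod ((adj V *v u) $ j) ^ 2))"
proof -
  have "cinner u (diag_in V a *v u) = cinner (adj V *v u) (diag_mat a *v (adj V *v u))"
    by (simp add: diag_in_def cinner_matrix_right flip: matrix_vector_mul_assoc)
  then show ?thesis
    by (simp add: cinner_def diag_mat_vec_nth mult.left_commute cnj_mult_self)
qed

lemma sum_cmod_sq_unitary:
  assumes "unitary V"
  shows "(\<Sum>j\<in>UNIV. cmod ((adj V *v u) $ j) ^ 2) = norm u ^ 2"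
proof -
  have "complex_of_real (\<Sum>j\<in>UNIV. cmod ((adj V *v u) $ j) ^ 2) = cinner (adj V *v u) (adj V *v u)"
    by (simp add: cinner_def cnj_mult_self)
  also have "\<dots> = cinner u u"
    using assms by (simp add: cinner_matrix_left matrix_vector_mul_assoc unitary_def)
  also have "\<dots> = of_real (norm u ^ 2)"
    by (rule cinner_self)
  finally show ?thesis
    using of_real_eq_iff by blast
qed

lemma Re_cinner_diag_in_real:
  "Re (cinner u (diag_in V (\<lambda>j. of_real (r j)) *v u)) = (\<Sum>j\<in>UNIV. r j * cmod ((adj V *v u) $ j) ^ 2)"
  by (simp add: cinner_diag_in Re_sum)

lemma psd_diag_in:
  assumes "\<And>j. r j \<ge> 0"
  shows "psd (diag_in V (\<lambda>j. of_real (r j)))"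
proof (rule psdI)
  show "hermitian (diag_in V (\<lambda>j. of_real (r j)))"
    by (simp add: hermitian_def adj_diag_in)
qed (simp add: Re_cinner_diag_in_real assms sum_nonneg)

section \<open>The spectral theorem\<close>

lemma unit_vector_orthogonal_exists:
  fixes K :: "(complex^'n::finite) set"
  assumes "finite K" "card K < CARD('n)"
  shows "\<exists>v. norm v = 1 \<and> (\<forall>k\<in>K. cinner k v = 0)"
proof -
  \<comment> \<open>Real orthogonality to both \<open>k\<close> and \<open>\<i> k\<close> is complex orthogonality to \<open>k\<close>.\<close>
  define S where "S = K \<union> (\<lambda>k. \<i> *s k) ` K"
  have "card S \<le> card K + card ((\<lambda>k. \<i> *s k) ` K)"
    unfolding S_def by (rule card_Un_le)
  also have "\<dots> \<le> 2 * card K"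
    using card_image_le [OF assms(1), of "\<lambda>k. \<i> *s k"] by simp
  finally have "card S \<le> 2 * card K" .
  then have "dim S < DIM(complex^'n)"
    using assms dim_le_card' [of S] by (simp add: S_def)
  then obtain x :: "complex^'n" where x: "x \<noteq> 0" "\<And>y. y \<in> span S \<Longrightarrow> orthogonal x y"
    using orthogonal_to_subspace_exists by blast
  have "cinner k x = 0" if "k \<in> K" for k
  proof -
    have "inner x k = 0" "inner x (\<i> *s k) = 0"
      using x(2) that by (simp_all add: S_def span_base orthogonal_def)
    then have "Re (cinner k x) = 0" "Re (cinner (\<i> *s k) x) = 0"
      by (simp_all add: Re_cinner inner_commute)
    then show ?thesis
      by (simp add: cinner_scale_left complex_eq_iff)
  qed
  with x(1) show ?thesis
    by (intro exI [of _ "(1 / norm x) *\<^sub>R x"]) (simp add: cinner_scaleR_right)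
qed

lemma nonpos_of_linear_le_quadratic:
  fixes n M :: real
  assumes "\<And>t. t > 0 \<Longrightarrow> 2 * t * n \<le> t^2 * M"
  shows "n \<le> 0"
proof (rule ccontr)
  assume "\<not> n \<le> 0"
  define t where "t = n / (\<bar>M\<bar> + 1)"
  have "t > 0"
    using \<open>\<not> n \<le> 0\<close> by (simp add: t_def)
  then have "2 * n \<le> t * M"
    using assms [OF \<open>t > 0\<close>] by (simp add: power2_eq_square)
  also have "\<dots> \<le> t * \<bar>M\<bar>"
    using \<open>t > 0\<close> by (simp add: mult_left_mono)
  also have "\<dots> < n"
    using \<open>\<not> n \<le> 0\<close> by (simp add: t_def field_simps)
  finally show False
    using \<open>\<not> n \<le> 0\<close> by simp
qed

lemma hermitian_form_maximiser_eigenvector: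
  fixes A :: "complex^'n::finite^'n"
  assumes herm: "hermitian A" and S: "subspace S" and inv: "\<And>x. x \<in> S \<Longrightarrow> A *v x \<in> S"
    and v: "v \<in> S" "norm v = 1"
    and max: "\<And>x. x \<in> S \<Longrightarrow> Re (cinner x (A *v x)) \<le> Re (cinner v (A *v v)) * norm x ^ 2"
  shows "A *v v = Re (cinner v (A *v v)) *\<^sub>R v"
proof -
  define f where "f x = Re (cinner x (A *v x))" for x
  define l where "l = f v"
  define w where "w = A *v v - l *\<^sub>R v"
  define n where "n = norm w ^ 2"
  have vAv: "cinner v (A *v v) = of_real l"
    using Im_cinner_hermitian [OF herm, of v] by (simp add: l_def f_def complex_eq_iff)
  have vw: "cinner v w = 0"
    using v(2) by (simp add: w_def cinner_diff_right cinner_scaleR_right vAv cinner_self)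
  have vAw: "cinner v (A *v w) = of_real n"
  proof -
    have "cinner v (A *v w) = cinner (w + l *\<^sub>R v) w"
      using herm by (simp add: cinner_matrix_right hermitian_def w_def)
    also have "\<dots> = of_real n"
      using vw cinner_commute [of v w] by (simp add: cinner_add_left cinner_scaleR_left n_def cinner_self)
    finally show ?thesis .
  qed
  \<comment> \<open>Moving from \<open>v\<close> towards \<open>w\<close> raises the form to first order by \<open>2 t n\<close>, which maximality forbids.\<close>
  have "2 * t * n \<le> t^2 * (l * n - f w)" if "t > 0" for t
  proof -
    have "v + t *\<^sub>R w \<in> S"
      unfolding w_def using S inv v(1) by (simp add: subspace_add subspace_diff subspace_scale)
    moreover have "f (v + t *\<^sub>R w) = l + 2 * t * n + t^2 * f w"
      using Re_cinner_add_hermitian [OF herm, of v "t *\<^sub>R w"]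
      by (simp add: f_def l_def vAw matrix_vector_mult_scaleR_right cinner_scaleR_left
          cinner_scaleR_right power2_eq_square)
    moreover have "norm (v + t *\<^sub>R w) ^ 2 = 1 + t^2 * n"
      using Re_cinner_add_hermitian [OF hermitian_mat_1, of v "t *\<^sub>R w"]
      by (simp add: cinner_self v(2) cinner_scaleR_right vw n_def power_mult_distrib)
    ultimately show ?thesis
      using max [of "v + t *\<^sub>R w"] unfolding f_def [symmetric] l_def [symmetric]
      by (simp add: algebra_simps)
  qed
  then have "n \<le> 0"
    by (rule nonpos_of_linear_le_quadratic)
  then have "w = 0"
    by (simp add: n_def)
  then show ?thesis
    by (simp add: w_def l_def f_def)
qed

lemma Re_cinner_le_of_sphere_max:
  fixes A :: "complex^'n::finite^'n"
  assumes "subspace S" "x \<in> S" "\<And>y. y \<in> S \<inter> sphere 0 1 \<Longrightarrow> Re (cinner y (A *v y)) \<le> M"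
  shows "Re (cinner x (A *v x)) \<le> M * norm x ^ 2"
proof (cases "x = 0")
  case False
  have "(1 / norm x) *\<^sub>R x \<in> S \<inter> sphere 0 1"
    using False assms(1,2) by (simp add: subspace_scale)
  then have "Re (cinner ((1 / norm x) *\<^sub>R x) (A *v ((1 / norm x) *\<^sub>R x))) \<le> M"
    by (rule assms(3))
  then have "Re (cinner x (A *v x)) / norm x ^ 2 \<le> M"
    by (simp add: matrix_vector_mult_scaleR_right cinner_scaleR_left cinner_scaleR_right
        power2_eq_square)
  with False show ?thesis
    by (simp add: divide_le_eq)
qed simp

lemma hermitian_eigenvector_orthogonal_exists:
  fixes A :: "complex^'n::finite^'n" and K :: "(complex^'n) set"
  assumes herm: "hermitian A" and K: "finite K" "card K < CARD('n)"
    and eigen: "\<And>k. k \<in> K \<Longrightarrow> \<exists>c::real. A *v k = c *\<^sub>R k"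
  shows "\<exists>v (c::real). norm v = 1 \<and> (\<forall>k\<in>K. cinner k v = 0) \<and> A *v v = c *\<^sub>R v"
proof -
  define S where "S = (\<Inter>k\<in>K. {v. cinner k v = 0})"
  define f where "f v = Re (cinner v (A *v v))" for v
  have S: "subspace S"
    by (auto simp: S_def subspace_def cinner_add_right cinner_scaleR_right)
  have inv: "A *v x \<in> S" if "x \<in> S" for x
  proof -
    have "cinner k (A *v x) = 0" if "k \<in> K" for k
    proof -
      obtain c :: real where "A *v k = c *\<^sub>R k"
        using eigen \<open>k \<in> K\<close> by blast
      moreover have "cinner k (A *v x) = cinner (A *v k) x"
        using herm by (simp add: cinner_matrix_right hermitian_def)
      ultimately show ?thesis
        using \<open>x \<in> S\<close> \<open>k \<in> K\<close> by (simp add: cinner_scaleR_left S_def)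
    qed
    then show ?thesis
      by (simp add: S_def)
  qed
  have "closed S"
    unfolding S_def cinner_def by (intro closed_INT ballI closed_Collect_eq continuous_intros)
  then have "compact (S \<inter> sphere 0 1)"
    by (intro closed_Int_compact compact_sphere)
  moreover have "S \<inter> sphere 0 1 \<noteq> {}"
    using unit_vector_orthogonal_exists [OF K] by (auto simp: S_def)
  moreover have "continuous_on (S \<inter> sphere 0 1) f"
    unfolding f_def cinner_def matrix_vector_mult_def by (intro continuous_intros)
  ultimately obtain v where "v \<in> S \<inter> sphere 0 1" and vmax: "\<forall>y\<in>S \<inter> sphere 0 1. f y \<le> f v"
    using continuous_attains_sup by blast
  then have v: "v \<in> S" "norm v = 1"
    by auto
  have bound: "Re (cinner x (A *v x)) \<le> Re (cinner v (A *v v)) * norm x ^ 2" if "x \<in> S" for x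
    using Re_cinner_le_of_sphere_max [OF S that] vmax by (simp add: f_def)
  have "A *v v = Re (cinner v (A *v v)) *\<^sub>R v"
    by (rule hermitian_form_maximiser_eigenvector [OF herm S inv v bound])
  moreover have "\<forall>k\<in>K. cinner k v = 0"
    using v(1) by (simp add: S_def)
  ultimately show ?thesis
    using v(2) by blast
qed

definition orthonormal_on :: "'i set \<Rightarrow> ('i \<Rightarrow> complex^'n) \<Rightarrow> bool" where
  "orthonormal_on F f \<longleftrightarrow> (\<forall>j\<in>F. \<forall>k\<in>F. cinner (f j) (f k) = (if j = k then 1 else 0))"

lemma orthonormal_on_insert:
  assumes "orthonormal_on F f" "norm v = 1" "\<forall>j\<in>F. cinner (f j) v = 0" "x \<notin> F"
  shows "orthonormal_on (insert x F) (f(x := v))"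
proof -
  have "cinner v v = 1"
    using assms(2) by (simp add: cinner_self)
  moreover have "cinner v (f j) = 0" if "j \<in> F" for j
    using assms(3) that cinner_commute [of v "f j"] by simp
  ultimately show ?thesis
    using assms(1,3,4) unfolding orthonormal_on_def by auto
qed

lemma hermitian_orthonormal_eigenvectors:
  fixes A :: "complex^'n::finite^'n" and F :: "'n set"
  assumes herm: "hermitian A"
  shows "\<exists>f (d::'n \<Rightarrow> real). orthonormal_on F f \<and> (\<forall>j\<in>F. A *v f j = d j *\<^sub>R f j)"
  using finite [of F]
proof (induction F rule: finite_induct)
  case empty
  then show ?case
    by (simp add: orthonormal_on_def)
next
  case (insert x F)
  then obtain f d where fd: "orthonormal_on F f" "\<forall>j\<in>F. A *v f j = d j *\<^sub>R f j"
    by blast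
  have "F \<subset> UNIV"
    using insert.hyps(2) by blast
  then have "card F < CARD('n)"
    by (simp add: psubset_card_mono)
  then have "card (f ` F) < CARD('n)"
    using card_image_le [OF insert.hyps(1), of f] by linarith
  moreover have "\<exists>c::real. A *v k = c *\<^sub>R k" if "k \<in> f ` F" for k
    using fd(2) that by blast
  ultimately obtain v c where v: "norm v = 1" "\<forall>k\<in>f ` F. cinner k v = 0" "A *v v = c *\<^sub>R v"
    using hermitian_eigenvector_orthogonal_exists [OF herm finite_imageI [OF insert.hyps(1)]] by blast
  have "orthonormal_on (insert x F) (f(x := v))"
    using orthonormal_on_insert [OF fd(1) v(1) _ insert.hyps(2)] v(2) by blast
  moreover have "\<forall>j\<in>insert x F. A *v (f(x := v)) j = (d(x := c)) j *\<^sub>R (f(x := v)) j"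
    using fd(2) v(3) insert.hyps(2) by auto
  ultimately show ?case
    by blast
qed

lemma orthonormal_on_extend:
  fixes g :: "'n::finite \<Rightarrow> complex^'n"
  assumes "orthonormal_on F g"
  shows "\<exists>g'. (\<forall>j\<in>F. g' j = g j) \<and> orthonormal_on UNIV g'"
proof -
  have "\<exists>g'. (\<forall>j\<in>F. g' j = g j) \<and> orthonormal_on (F \<union> G) g'" if "F \<inter> G = {}" for G
    using finite [of G] that
  proof (induction G rule: finite_induct)
    case (insert x G)
    then obtain g' where g': "\<forall>j\<in>F. g' j = g j" "orthonormal_on (F \<union> G) g'"
      by auto
    have "x \<notin> F \<union> G"
      using insert by auto
    then have "F \<union> G \<subset> UNIV"
      by blast
    then have "card (F \<union> G) < CARD('n)"
      by (simp add: psubset_card_mono)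
    moreover have "card (g' ` (F \<union> G)) \<le> card (F \<union> G)"
      by (rule card_image_le) simp
    ultimately have card_lt: "card (g' ` (F \<union> G)) < CARD('n)"
      by linarith
    obtain v where v: "norm v = 1" "\<forall>k\<in>g' ` (F \<union> G). cinner k v = 0"
      using unit_vector_orthogonal_exists [OF _ card_lt] by auto
    have "orthonormal_on (insert x (F \<union> G)) (g'(x := v))"
      using orthonormal_on_insert [OF g'(2) v(1) _ \<open>x \<notin> F \<union> G\<close>] v(2) by blast
    moreover have "\<forall>j\<in>F. (g'(x := v)) j = g j"
      using g'(1) \<open>x \<notin> F \<union> G\<close> by auto
    ultimately have "\<exists>g''. (\<forall>j\<in>F. g'' j = g j) \<and> orthonormal_on (insert x (F \<union> G)) g''"
      by blast
    then show ?case
      by simp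
  qed (use assms in \<open>intro exI [of _ g], simp\<close>)
  from this [of "UNIV - F"] show ?thesis
    by (metis Diff_disjoint Un_Diff_cancel sup_top_right)
qed

definition mat_of_cols :: "('n \<Rightarrow> complex^'m) \<Rightarrow> complex^'n^'m" where
  "mat_of_cols f = (\<chi> i j. f j $ i)"

lemma unitary_mat_of_cols:
  fixes f :: "'n::finite \<Rightarrow> complex^'n"
  assumes "orthonormal_on UNIV f"
  shows "unitary (mat_of_cols f)"
proof -
  have "adj (mat_of_cols f) ** mat_of_cols f = mat 1"
    using assms
    by (simp add: orthonormal_on_def mat_of_cols_def matrix_matrix_mult_def cinner_def vec_eq_iff mat_def)
  then show ?thesis
    using matrix_left_right_inverse unitary_def by blast
qed

theorem hermitian_unitary_diagonalisation:
  fixes A :: "complex^'n::finite^'n"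
  assumes "hermitian A"
  shows "\<exists>V (d::'n \<Rightarrow> real). unitary V \<and> A = diag_in V (\<lambda>j. of_real (d j))"
proof -
  obtain f and d :: "'n \<Rightarrow> real" where fd: "orthonormal_on UNIV f" "\<forall>j. A *v f j = d j *\<^sub>R f j"
    using hermitian_orthonormal_eigenvectors [OF assms, of UNIV] by auto
  define V where "V = mat_of_cols f"
  have V: "unitary V"
    unfolding V_def by (rule unitary_mat_of_cols [OF fd(1)])
  have "(A ** V) $ i $ j = (V ** diag_mat (\<lambda>j. of_real (d j))) $ i $ j" for i j
  proof -
    have "(A ** V) $ i $ j = (A *v f j) $ i"
      by (simp add: V_def mat_of_cols_def matrix_matrix_mult_def matrix_vector_mult_def)
    also have "\<dots> = of_real (d j) * f j $ i"
      by (simp only: fd(2) vector_scaleR_component) (simp add: scaleR_conv_of_real)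
    finally show ?thesis
      by (simp add: matrix_mult_diag_mat V_def mat_of_cols_def mult.commute)
  qed
  then have "A ** V = V ** diag_mat (\<lambda>j. of_real (d j))"
    by (simp add: vec_eq_iff)
  then have "A = diag_in V (\<lambda>j. of_real (d j))"
    using V by (metis diag_in_def matrix_mul_assoc matrix_mul_rid unitary_def)
  with V show ?thesis
    by blast
qed

lemma psd_unitary_diagonalisation:
  fixes A :: "complex^'n::finite^'n"
  assumes "psd A"
  shows "\<exists>V (r::'n \<Rightarrow> real). unitary V \<and> (\<forall>j. r j \<ge> 0) \<and> A = diag_in V (\<lambda>j. of_real (r j))"
proof -
  obtain V and r :: "'n \<Rightarrow> real" where V: "unitary V" "A = diag_in V (\<lambda>j. of_real (r j))"
    using hermitian_unitary_diagonalisation assms psd_def by blast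
  have "r j \<ge> 0" for j
  proof -
    have "0 \<le> Re (cinner (V *v axis j 1) (A *v (V *v axis j 1)))"
      using assms by (rule psd_form_nonneg)
    also have "\<dots> = r j"
      by (simp add: V(2) diag_in_axis [OF V(1)] cinner_scale_right cinner_unitary [OF V(1)]
          cinner_axis_axis)
    finally show ?thesis .
  qed
  with V show ?thesis
    by blast
qed

section \<open>Square roots, polar decomposition and pseudo-inverses\<close>

lemma psd_form_eq_0_imp_kernel:
  assumes "psd B" "Re (cinner w (B *v w)) = 0"
  shows "B *v w = 0"
proof -
  obtain V r where V: "unitary V" "\<forall>j. r j \<ge> 0" "B = diag_in V (\<lambda>j. of_real (r j))"
    using psd_unitary_diagonalisation [OF assms(1)] by blast
  define y where "y = adj V *v w"
  have "(\<Sum>j\<in>UNIV. r j * cmod (y $ j) ^ 2) = 0"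
    using assms(2) by (simp add: V(3) Re_cinner_diag_in_real y_def)
  then have "r j * cmod (y $ j) ^ 2 = 0" for j
    using V(2) by (subst (asm) sum_nonneg_eq_0_iff) auto
  then have "diag_mat (\<lambda>j. of_real (r j)) *v y = 0"
    by (simp add: vec_eq_iff diag_mat_vec_nth)
  then show ?thesis
    by (simp add: V(3) diag_in_def y_def flip: matrix_vector_mul_assoc)
qed

lemma unitary_conj_mult:
  assumes "unitary V"
  shows "adj V ** (X ** Y) ** V = (adj V ** X ** V) ** (adj V ** Y ** V)"
proof -
  have "(adj V ** X ** V) ** (adj V ** Y ** V) = adj V ** X ** (V ** adj V) ** Y ** V"
    by (simp add: matrix_mul_assoc)
  with assms show ?thesis
    by (simp add: unitary_def matrix_mul_assoc)
qed

lemma psd_commute_of_commute_square: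
  fixes B C :: "complex^'n::finite^'n"
  assumes "psd B" "C ** (B ** B) = (B ** B) ** C"
  shows "C ** B = B ** C"
proof -
  obtain V b where V: "unitary V" "\<forall>j. b j \<ge> 0" "B = diag_in V (\<lambda>j. of_real (b j))"
    using psd_unitary_diagonalisation [OF assms(1)] by blast
  define M where "M = adj V ** C ** V"
  define D where "D a = diag_mat (\<lambda>j. of_real (a j) :: complex)" for a :: "'n \<Rightarrow> real"
  have V': "unitary (adj V)"
    using V(1) by (rule unitary_adj)
  have diag: "adj V ** diag_in V a ** V = diag_mat a" for a
    using V(1) by (simp add: diag_in_def unitary_def matrix_mul_assoc)
      (simp add: unitary_def flip: matrix_mul_assoc)
  have "M ** D (\<lambda>j. b j * b j) = adj V ** (C ** (B ** B)) ** V"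
    by (simp add: unitary_conj_mult [OF V(1)] V(3) diag_in_mult [OF V(1)] diag D_def M_def)
  also have "\<dots> = adj V ** ((B ** B) ** C) ** V"
    by (simp only: assms(2))
  also have "\<dots> = D (\<lambda>j. b j * b j) ** M"
    by (simp add: unitary_conj_mult [OF V(1)] V(3) diag_in_mult [OF V(1)] diag D_def M_def)
  finally have sq: "M $ i $ j * of_real (b j * b j) = of_real (b i * b i) * M $ i $ j" for i j
    by (simp add: D_def matrix_mult_diag_mat diag_mat_mult_matrix vec_eq_iff)
  have "M $ i $ j * of_real (b j) = of_real (b i) * M $ i $ j" for i j
  proof (cases "M $ i $ j = 0")
    case False
    with sq [of i j] have "b j * b j = b i * b i"
      by (simp add: mult.commute flip: of_real_mult)
    then have "b j = b i"
      using V(2) power2_eq_iff_nonneg [of "b j" "b i"] by (simp add: power2_eq_square)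
    then show ?thesis
      by (simp add: mult.commute)
  qed simp
  then have "M ** D b = D b ** M"
    by (simp add: D_def matrix_mult_diag_mat diag_mat_mult_matrix vec_eq_iff)
  then have "V ** (M ** D b) ** adj V = V ** (D b ** M) ** adj V"
    by simp
  moreover have "V ** M ** adj V = C"
    using V(1) by (simp add: M_def unitary_def matrix_mul_assoc) (simp add: unitary_def flip: matrix_mul_assoc)
  moreover have "V ** D b ** adj V = B"
    by (simp add: V(3) diag_in_def D_def)
  ultimately show ?thesis
    using unitary_conj_mult [OF V'] by simp
qed

lemma psd_sqrt_unique:
  fixes B C :: "complex^'n::finite^'n"
  assumes B: "psd B" and C: "psd C" and BC: "B ** B = C ** C"
  shows "B = C"
proof -
  have "C ** (B ** B) = (B ** B) ** C"
    by (simp add: BC matrix_mul_assoc)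
  then have CB: "C ** B = B ** C"
    by (rule psd_commute_of_commute_square [OF B])
  define E where "E = B - C"
  have hE: "adj E = E"
    using B C by (simp add: E_def adj_diff adj_psd)
  have E0: "E ** (B + C) = 0"
    by (simp add: E_def matrix_add_ldistrib matrix_diff_rdistrib BC CB)
  \<comment> \<open>\<open>E u\<close> lies in the kernels of \<open>B\<close> and \<open>C\<close>, because \<open>B + C\<close> has vanishing form there.\<close>
  have "E *v (E *v u) = 0" for u
  proof -
    define w where "w = E *v u"
    have "cinner w ((B + C) *v w) = cinner u ((E ** (B + C)) *v w)"
      by (simp add: w_def cinner_matrix_right hE flip: matrix_vector_mul_assoc)
    then have "cinner w (B *v w) + cinner w (C *v w) = 0"
      by (simp add: E0 matrix_vector_mult_add_rdistrib cinner_add_right)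
    then have "Re (cinner w (B *v w)) + Re (cinner w (C *v w)) = 0"
      by (metis plus_complex.sel(1) zero_complex.sel(1))
    moreover have "Re (cinner w (B *v w)) \<ge> 0" "Re (cinner w (C *v w)) \<ge> 0"
      using B C by (auto intro: psd_form_nonneg)
    ultimately have "Re (cinner w (B *v w)) = 0" "Re (cinner w (C *v w)) = 0"
      by linarith+
    then have "B *v w = 0" "C *v w = 0"
      using psd_form_eq_0_imp_kernel B C by blast+
    then show ?thesis
      by (simp add: w_def E_def matrix_vector_mult_diff_rdistrib)
  qed
  then have "cinner (E *v u) (E *v u) = 0" for u
    by (simp add: cinner_matrix_left hE)
  then have "E = 0"
    by (simp add: cinner_self matrix_eq)
  then show ?thesis
    by (simp add: E_def)
qed

lemma msqrt_eqI:
  assumes "psd B" "B ** B = A"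
  shows "msqrt A = B"
  unfolding msqrt_def
proof (rule the_equality)
  show "psd B \<and> B ** B = A"
    using assms by blast
  show "C = B" if "psd C \<and> C ** C = A" for C
    using that psd_sqrt_unique assms by metis
qed

lemma msqrt_diag_in:
  assumes "unitary V" "\<And>j. r j \<ge> 0"
  shows "msqrt (diag_in V (\<lambda>j. of_real (r j))) = diag_in V (\<lambda>j. of_real (sqrt (r j)))"
proof (rule msqrt_eqI)
  show "psd (diag_in V (\<lambda>j. of_real (sqrt (r j))))"
    by (rule psd_diag_in) (simp add: assms(2))
  show "diag_in V (\<lambda>j. of_real (sqrt (r j))) ** diag_in V (\<lambda>j. of_real (sqrt (r j)))
      = diag_in V (\<lambda>j. of_real (r j))"
    by (simp add: diag_in_mult [OF assms(1)] assms(2) flip: of_real_mult)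
qed

lemma
  assumes "psd A"
  shows psd_msqrt: "psd (msqrt A)"
    and msqrt_square: "msqrt A ** msqrt A = A"
proof -
  obtain V r where V: "unitary V" "\<forall>j. r j \<ge> 0" "A = diag_in V (\<lambda>j. of_real (r j))"
    using psd_unitary_diagonalisation [OF assms] by blast
  then have "msqrt A = diag_in V (\<lambda>j. of_real (sqrt (r j)))"
    by (simp add: msqrt_diag_in)
  then show "psd (msqrt A)" "msqrt A ** msqrt A = A"
    using V by (simp_all add: psd_diag_in diag_in_mult flip: of_real_mult)
qed

lemma adj_msqrt: "psd A \<Longrightarrow> adj (msqrt A) = msqrt A"
  by (simp add: adj_psd psd_msqrt)

lemma orthogonal_family_normalise:
  fixes z :: "'n::finite \<Rightarrow> complex^'n"
  assumes "\<And>j k. j \<noteq> k \<Longrightarrow> cinner (z j) (z k) = 0"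
  shows "\<exists>g. orthonormal_on UNIV g \<and> (\<forall>k. z k = of_real (norm (z k)) *s g k)"
proof -
  define J where "J = {j. z j \<noteq> 0}"
  define g where "g j = of_real (1 / norm (z j)) *s z j" for j
  have "orthonormal_on J g"
    unfolding orthonormal_on_def
  proof (intro ballI)
    fix j k
    assume "j \<in> J" "k \<in> J"
    show "cinner (g j) (g k) = (if j = k then 1 else 0)"
    proof (cases "j = k")
      case True
      with \<open>j \<in> J\<close> show ?thesis
        unfolding g_def cinner_scale_left cinner_scale_right
        by (simp add: J_def cinner_self power2_eq_square flip: of_real_mult)
    qed (simp add: g_def cinner_scale_left cinner_scale_right assms)
  qed
  then obtain g' where g': "\<forall>j\<in>J. g' j = g j" "orthonormal_on UNIV g'"
    using orthonormal_on_extend by blast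
  have "z k = of_real (norm (z k)) *s g' k" for k
  proof (cases "k \<in> J")
    case True
    then have "norm (z k) \<noteq> 0"
      by (simp add: J_def)
    then show ?thesis
      by (simp add: g'(1) True g_def vector_smult_assoc flip: of_real_mult)
  qed (simp add: J_def)
  with g'(2) show ?thesis
    by blast
qed

lemma cinner_image_eigenbasis:
  assumes "unitary V" "adj Z ** Z = diag_in V a"
  shows "cinner (Z *v (V *v axis j 1)) (Z *v (V *v axis k 1)) = (if j = k then a k else 0)"
proof -
  have "cinner (Z *v (V *v axis j 1)) (Z *v (V *v axis k 1))
      = cinner (V *v axis j 1) ((adj Z ** Z) *v (V *v axis k 1))"
    by (simp add: cinner_matrix_right flip: matrix_vector_mul_assoc)
  then show ?thesis
    by (simp add: assms(2) diag_in_axis [OF assms(1)] cinner_scale_right cinner_unitary [OF assms(1)]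
        cinner_axis_axis)
qed

theorem polar_decomposition:
  fixes Z :: "complex^'n::finite^'n"
  shows "\<exists>W. unitary W \<and> Z = W ** msqrt (adj Z ** Z)"
proof -
  obtain V r where V: "unitary V" "\<forall>j. r j \<ge> 0" "adj Z ** Z = diag_in V (\<lambda>j. of_real (r j))"
    using psd_unitary_diagonalisation [OF psd_adj_mult_self] by blast
  define z where "z k = Z *v (V *v axis k 1)" for k
  define d where "d j = complex_of_real (sqrt (r j))" for j
  have zz: "cinner (z j) (z k) = (if j = k then of_real (r k) else 0)" for j k
    unfolding z_def by (rule cinner_image_eigenbasis [OF V(1,3)])
  have "norm (z k) = sqrt (r k)" for k
  proof -
    have "of_real (norm (z k) ^ 2) = (of_real (r k) :: complex)"
      using zz [of k k] by (simp add: cinner_self)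
    then have "norm (z k) ^ 2 = r k"
      using of_real_eq_iff by blast
    then show ?thesis
      using real_sqrt_unique [OF _ norm_ge_zero] by metis
  qed
  moreover have "cinner (z j) (z k) = 0" if "j \<noteq> k" for j k
    using zz that by simp
  ultimately obtain g where g: "orthonormal_on UNIV g" "\<And>k. z k = d k *s g k"
    using orthogonal_family_normalise [of z] unfolding d_def by metis
  have ZV: "Z ** V = mat_of_cols g ** diag_mat d"
  proof -
    have "(Z ** V) $ i $ k = z k $ i" for i k
      by (simp add: z_def matrix_vector_mul_assoc matrix_vector_mult_axis)
    then show ?thesis
      by (simp add: vec_eq_iff g(2) matrix_mult_diag_mat mat_of_cols_def mult.commute)
  qed
  define W where "W = mat_of_cols g ** adj V"
  have "unitary W"
    unfolding W_def by (intro unitary_mult unitary_mat_of_cols g(1) unitary_adj V(1))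
  moreover have "Z = W ** diag_in V d"
  proof -
    have "Z = (Z ** V) ** adj V"
      using V(1) by (simp add: unitary_def flip: matrix_mul_assoc)
    moreover have "W ** diag_in V d = mat_of_cols g ** (adj V ** V) ** diag_mat d ** adj V"
      by (simp add: W_def diag_in_def matrix_mul_assoc)
    ultimately show ?thesis
      using V(1) by (simp add: ZV unitary_def)
  qed
  moreover have "msqrt (adj Z ** Z) = diag_in V d"
    by (simp add: V(2,3) msqrt_diag_in [OF V(1)] d_def [abs_def])
  ultimately show ?thesis
    by auto
qed

lemma psd_sqrt_pseudo_inverse:
  fixes \<rho> :: "complex^'n::finite^'n"
  assumes "psd \<rho>"
  obtains R P where "msqrt \<rho> ** R = P" "R ** msqrt \<rho> = P" "R ** \<rho> ** R = P"
    "adj R = R" "adj P = P" "\<rho> ** (mat 1 - P) = 0" "\<And>x. Re (cinner x (P *v x)) \<le> norm x ^ 2"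
proof -
  \<comment> \<open>\<open>R\<close> inverts \<open>msqrt \<rho>\<close> on the support of \<open>\<rho>\<close>, and \<open>P\<close> is the projection onto that support.\<close>
  obtain V r where V: "unitary V" "\<forall>j. r j \<ge> 0" "\<rho> = diag_in V (\<lambda>j. of_real (r j))"
    using psd_unitary_diagonalisation [OF assms] by blast
  define R where "R = diag_in V (\<lambda>j. of_real (if r j > 0 then 1 / sqrt (r j) else 0))"
  define P where "P = diag_in V (\<lambda>j. of_real (if r j > 0 then 1 else 0))"
  have sqrt: "msqrt \<rho> = diag_in V (\<lambda>j. of_real (sqrt (r j)))"
    by (simp add: V(3) msqrt_diag_in [OF V(1)] V(2))
  have "msqrt \<rho> ** R = P" "R ** msqrt \<rho> = P"
    by (auto simp: sqrt R_def P_def diag_in_mult [OF V(1)] intro!: diag_in_cong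
        simp flip: of_real_mult)
  moreover have "R ** \<rho> ** R = P"
    by (auto simp: R_def P_def V(3) diag_in_mult [OF V(1)] intro!: diag_in_cong
        simp flip: of_real_mult)
  moreover have "adj R = R" "adj P = P"
    by (simp_all add: R_def P_def adj_diag_in)
  moreover have "\<rho> ** (mat 1 - P) = 0"
  proof -
    have "r j * (1 - (if r j > 0 then 1 else 0)) = 0" for j
      using V(2) by (metis diff_self less_eq_real_def mult_eq_0_iff)
    then have "\<rho> ** (mat 1 - P) = diag_in V (\<lambda>_. 0)"
      unfolding V(3) P_def diag_in_1 [OF V(1), symmetric] diag_in_diff diag_in_mult [OF V(1)]
      by (intro diag_in_cong) (metis of_real_0 of_real_1 of_real_diff of_real_mult)
    then show ?thesis
      by (simp add: diag_in_0)
  qed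
  moreover have "Re (cinner x (P *v x)) \<le> norm x ^ 2" for x
  proof -
    have "Re (cinner x (P *v x)) \<le> (\<Sum>j\<in>UNIV. cmod ((adj V *v x) $ j) ^ 2)"
      unfolding P_def Re_cinner_diag_in_real by (intro sum_mono) simp
    then show ?thesis
      by (simp add: sum_cmod_sq_unitary [OF V(1)])
  qed
  ultimately show ?thesis
    using that by blast
qed

section \<open>Block positivity and the variational formula for the root fidelity\<close>

text \<open>\<open>block_psd \<rho> X \<sigma>\<close> says that the block operator with rows \<open>(\<rho>, X)\<close> and \<open>(adj X, \<sigma>)\<close>
  is positive semidefinite, written out as its quadratic form at \<open>(u, v)\<close>.\<close>

definition block_psd :: "complex^'n^'n \<Rightarrow> complex^'n^'n \<Rightarrow> complex^'n^'n \<Rightarrow> bool" where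
  "block_psd \<rho> X \<sigma> \<longleftrightarrow>
     (\<forall>u v. 0 \<le> Re (cinner u (\<rho> *v u)) + 2 * Re (cinner u (X *v v)) + Re (cinner v (\<sigma> *v v)))"

definition contraction :: "complex^'n^'n \<Rightarrow> bool" where
  "contraction K \<longleftrightarrow> (\<forall>x y. cmod (cinner x (K *v y)) \<le> norm x * norm y)"

lemma nonneg_quadratic_discriminant:
  fixes a b c :: real
  assumes "\<And>t. 0 \<le> t^2 * a - 2 * t * c + b" "a \<ge> 0" "c \<ge> 0"
  shows "c^2 \<le> a * b"
proof (cases "a = 0")
  case True
  show ?thesis
  proof (rule ccontr)
    assume "\<not> ?thesis"
    with True assms(3) have "c > 0"
      by (simp add: less_le)
    then show False
      using assms(1) [of "(b + 1) / (2 * c)"] True by (simp add: field_simps)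
  qed
next
  case False
  with assms(2) have "a > 0"
    by simp
  have "0 \<le> (c / a)^2 * a - 2 * (c / a) * c + b"
    by (rule assms(1))
  also have "\<dots> = b - c^2 / a"
    using \<open>a > 0\<close> by (simp add: field_simps power2_eq_square)
  finally show ?thesis
    using \<open>a > 0\<close> by (simp add: field_simps)
qed

lemma block_psd_cauchy_schwarz_sum:
  assumes bp: "block_psd \<rho> X \<sigma>" and "finite I"
  shows "cmod (\<Sum>k\<in>I. cinner (u k) (X *v v k)) ^ 2
     \<le> (\<Sum>k\<in>I. Re (cinner (u k) (\<rho> *v u k))) * (\<Sum>k\<in>I. Re (cinner (v k) (\<sigma> *v v k)))"
proof -
  define c where "c = (\<Sum>k\<in>I. cinner (u k) (X *v v k))"
  define a where "a = (\<Sum>k\<in>I. Re (cinner (u k) (\<rho> *v u k)))"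
  define b where "b = (\<Sum>k\<in>I. Re (cinner (v k) (\<sigma> *v v k)))"
  \<comment> \<open>A unimodular \<open>z\<close> rotating \<open>c\<close> onto the negative real axis.\<close>
  define z where "z = (if c = 0 then 1 else - c / of_real (cmod c))"
  have zc: "cnj z * c = - of_real (cmod c)" and zz: "cnj z * z = 1"
    by (auto simp: z_def cnj_mult_self power2_eq_square norm_divide)
  have "0 \<le> t^2 * a - 2 * t * cmod c + b" for t :: real
  proof -
    define s where "s = of_real t * z"
    have ss: "cnj s * s = of_real (t^2)"
      using zz by (simp add: s_def power2_eq_square mult_ac)
    have "0 \<le> (\<Sum>k\<in>I. Re (cinner (s *s u k) (\<rho> *v (s *s u k))) + 2 * Re (cinner (s *s u k) (X *v v k))
              + Re (cinner (v k) (\<sigma> *v v k)))"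
      using bp unfolding block_psd_def by (intro sum_nonneg) blast
    also have "\<dots> = t^2 * a + 2 * Re (cnj s * c) + b"
    proof -
      have "cinner (s *s u k) (\<rho> *v (s *s u k)) = (cnj s * s) * cinner (u k) (\<rho> *v u k)" for k
        by (simp add: matrix_vector_mult_scale cinner_scale_left cinner_scale_right mult_ac)
      then show ?thesis
        by (simp add: ss a_def b_def c_def sum.distrib sum_distrib_left Re_sum cinner_scale_left)
    qed
    also have "cnj s * c = - of_real (t * cmod c)"
      by (simp add: s_def mult.assoc zc)
    finally show ?thesis
      by simp
  qed
  moreover have "a \<ge> 0"
    using bp unfolding a_def block_psd_def by (intro sum_nonneg) (metis add.right_neutral
        cinner_zero_left cinner_zero_right matrix_vector_mult_0_right zero_complex.sel(1) mult_zero_right)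
  ultimately have "cmod c ^ 2 \<le> a * b"
    using nonneg_quadratic_discriminant by simp
  then show ?thesis
    by (simp add: a_def b_def c_def)
qed

lemma block_psd_cauchy_schwarz:
  "block_psd \<rho> X \<sigma> \<Longrightarrow>
     cmod (cinner u (X *v v)) ^ 2 \<le> Re (cinner u (\<rho> *v u)) * Re (cinner v (\<sigma> *v v))"
  using block_psd_cauchy_schwarz_sum [of \<rho> X \<sigma> "{()}" "\<lambda>_. u" "\<lambda>_. v"] by simp

lemma block_psd_trace_cauchy_schwarz:
  "block_psd \<rho> X \<sigma> \<Longrightarrow>
     cmod (trace (A ** X ** adj B)) ^ 2 \<le> Re (trace (A ** \<rho> ** adj A)) * Re (trace (B ** \<sigma> ** adj B))"
  using block_psd_cauchy_schwarz_sum [of \<rho> X \<sigma> UNIV "\<lambda>k. adj A *v axis k 1" "\<lambda>k. adj B *v axis k 1"]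
  by (simp add: sandwich_diagonal_entry trace_def Re_sum)

lemma block_psd_kernel_left:
  assumes "block_psd \<rho> X \<sigma>" "\<rho> *v u = 0"
  shows "cinner u (X *v v) = 0"
  using block_psd_cauchy_schwarz [OF assms(1), of u v] assms(2) by simp

lemma block_psd_kernel_right:
  assumes "block_psd \<rho> X \<sigma>" "\<sigma> *v v = 0"
  shows "cinner u (X *v v) = 0"
  using block_psd_cauchy_schwarz [OF assms(1), of u v] assms(2) by simp

lemma block_psd_add:
  "block_psd \<rho> X \<sigma> \<Longrightarrow> block_psd \<rho>' X' \<sigma>' \<Longrightarrow> block_psd (\<rho> + \<rho>') (X + X') (\<sigma> + \<sigma>')"
  unfolding block_psd_def
  by (simp add: matrix_vector_mult_add_rdistrib cinner_add_right) (smt (verit))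

lemma block_psd_sandwich:
  "block_psd \<rho> X \<sigma> \<Longrightarrow> block_psd (A ** \<rho> ** adj A) (A ** X ** adj B) (B ** \<sigma> ** adj B)"
  unfolding block_psd_def by (simp add: cinner_sandwich)

lemma psd_add: "psd A \<Longrightarrow> psd B \<Longrightarrow> psd (A + B)"
  by (intro psdI) (auto simp: hermitian_def adj_add adj_psd matrix_vector_mult_add_rdistrib
      cinner_add_right intro: add_nonneg_nonneg psd_form_nonneg)

lemma psd_sandwich:
  assumes "psd \<rho>"
  shows "psd (A ** \<rho> ** adj A)"
proof (rule psdI)
  show "hermitian (A ** \<rho> ** adj A)"
    using assms by (simp add: hermitian_def adj_mult adj_psd matrix_mul_assoc)
  show "Re (cinner v ((A ** \<rho> ** adj A) *v v)) \<ge> 0" for v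
    using psd_form_nonneg [OF assms] by (simp add: cinner_sandwich)
qed

lemma adj_mult_self_msqrt_mult_msqrt:
  assumes "psd \<rho>" "psd \<sigma>"
  shows "adj (msqrt \<sigma> ** msqrt \<rho>) ** (msqrt \<sigma> ** msqrt \<rho>) = msqrt \<rho> ** \<sigma> ** msqrt \<rho>"
proof -
  have "adj (msqrt \<sigma> ** msqrt \<rho>) ** (msqrt \<sigma> ** msqrt \<rho>)
      = msqrt \<rho> ** (msqrt \<sigma> ** msqrt \<sigma>) ** msqrt \<rho>"
    by (simp add: adj_mult adj_msqrt assms matrix_mul_assoc)
  then show ?thesis
    by (simp add: msqrt_square [OF assms(2)])
qed

lemma block_psd_gram: "block_psd (adj A ** A) (adj A ** B) (adj B ** B)"
  unfolding block_psd_def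
proof (intro allI)
  fix u v
  have "cinner u ((adj A ** A) *v u) = cinner (A *v u) (A *v u)"
    and "cinner u ((adj A ** B) *v v) = cinner (A *v u) (B *v v)"
    and "cinner v ((adj B ** B) *v v) = cinner (B *v v) (B *v v)"
    by (simp_all add: cinner_matrix_left matrix_vector_mul_assoc)
  moreover have "0 \<le> Re (cinner (A *v u + B *v v) (mat 1 *v (A *v u + B *v v)))"
    by (simp add: cinner_self)
  ultimately show "0 \<le> Re (cinner u ((adj A ** A) *v u)) + 2 * Re (cinner u ((adj A ** B) *v v))
      + Re (cinner v ((adj B ** B) *v v))"
    using Re_cinner_add_hermitian [OF hermitian_mat_1, of "A *v u" "B *v v"] by simp
qed

lemma sqrt_fidelity_witness:
  fixes \<rho> \<sigma> :: "complex^'n::finite^'n"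
  assumes r: "psd \<rho>" and s: "psd \<sigma>"
  obtains X where "block_psd \<rho> X \<sigma>" "Re (trace X) = sqrt_fidelity \<rho> \<sigma>"
proof -
  define a where "a = msqrt \<rho>"
  define b where "b = msqrt \<sigma>"
  define S where "S = msqrt (a ** \<sigma> ** a)"
  obtain W where W: "unitary W" "b ** a = W ** S"
    using polar_decomposition [of "b ** a"] adj_mult_self_msqrt_mult_msqrt [OF r s]
    by (auto simp: S_def a_def b_def)
  define X where "X = adj (W ** a) ** b"
  have ha: "adj a = a"
    using r by (simp add: a_def adj_msqrt)
  have "trace X = trace (adj W ** (b ** a))"
    unfolding X_def adj_mult ha by (metis matrix_mul_assoc trace_mul_sym)
  also have "\<dots> = trace S"
    using W by (simp add: matrix_mul_assoc unitary_def)
  finally have "Re (trace X) = sqrt_fidelity \<rho> \<sigma>"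
    by (simp add: sqrt_fidelity_def S_def a_def)
  moreover have "block_psd \<rho> X \<sigma>"
  proof -
    have "adj (W ** a) ** (W ** a) = a ** (adj W ** W) ** a"
      by (simp add: adj_mult ha matrix_mul_assoc)
    then have "adj (W ** a) ** (W ** a) = \<rho>"
      using W(1) r by (simp add: unitary_def a_def msqrt_square)
    moreover have "adj b ** b = \<sigma>"
      using s by (simp add: b_def adj_msqrt msqrt_square)
    ultimately show ?thesis
      using block_psd_gram [of "W ** a" b] by (simp only: X_def)
  qed
  ultimately show ?thesis
    using that by blast
qed

lemma block_psd_support:
  assumes X: "block_psd \<rho> X \<sigma>" and P: "adj P = P" "\<rho> ** (mat 1 - P) = 0"
    and P': "\<sigma> ** (mat 1 - P') = 0"
  shows "X = P ** X ** P'"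
proof -
  have "(mat 1 - P) ** X = 0"
  proof (rule matrix_eq_cinnerI)
    fix e v
    have "\<rho> *v ((mat 1 - P) *v e) = 0"
      by (simp add: matrix_vector_mul_assoc P(2))
    then have "cinner ((mat 1 - P) *v e) (X *v v) = 0"
      by (rule block_psd_kernel_left [OF X])
    then show "cinner e (((mat 1 - P) ** X) *v v) = cinner e (0 *v v)"
      by (simp add: cinner_matrix_left adj_diff P(1) flip: matrix_vector_mul_assoc)
  qed
  moreover have "X ** (mat 1 - P') = 0"
  proof (rule matrix_eq_cinnerI)
    fix u v
    have "\<sigma> *v ((mat 1 - P') *v v) = 0"
      by (simp add: matrix_vector_mul_assoc P')
    then show "cinner u ((X ** (mat 1 - P')) *v v) = cinner u (0 *v v)"
      using block_psd_kernel_right [OF X] by (simp flip: matrix_vector_mul_assoc)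
  qed
  ultimately show ?thesis
    by (simp add: matrix_diff_rdistrib matrix_diff_ldistrib matrix_mul_assoc)
qed

lemma block_psd_contraction_factor:
  fixes \<rho> \<sigma> X :: "complex^'n::finite^'n"
  assumes r: "psd \<rho>" and s: "psd \<sigma>" and bp: "block_psd \<rho> X \<sigma>"
  obtains K where "X = msqrt \<rho> ** K ** msqrt \<sigma>" "contraction K"
proof -
  obtain Ra Pa where A: "msqrt \<rho> ** Ra = Pa" "Ra ** \<rho> ** Ra = Pa" "adj Ra = Ra" "adj Pa = Pa"
    "\<rho> ** (mat 1 - Pa) = 0" "\<And>x. Re (cinner x (Pa *v x)) \<le> norm x ^ 2"
    using psd_sqrt_pseudo_inverse [OF r] by metis
  obtain Rb Pb where B: "Rb ** msqrt \<sigma> = Pb" "Rb ** \<sigma> ** Rb = Pb" "adj Rb = Rb"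
    "\<sigma> ** (mat 1 - Pb) = 0" "\<And>x. Re (cinner x (Pb *v x)) \<le> norm x ^ 2"
    using psd_sqrt_pseudo_inverse [OF s] by metis
  have "X = Pa ** X ** Pb"
    by (rule block_psd_support [OF bp A(4,5) B(4)])
  then have "X = msqrt \<rho> ** (Ra ** X ** Rb) ** msqrt \<sigma>"
    by (simp add: matrix_mul_assoc flip: A(1) B(1))
  moreover have "contraction (Ra ** X ** Rb)"
    unfolding contraction_def
  proof (intro allI)
    fix x y
    have "cinner (Ra *v x) (\<rho> *v (Ra *v x)) = cinner x ((Ra ** \<rho> ** Ra) *v x)"
      by (simp add: cinner_matrix_left A(3) matrix_vector_mul_assoc matrix_mul_assoc)
    then have Ra_form: "Re (cinner (Ra *v x) (\<rho> *v (Ra *v x))) = Re (cinner x (Pa *v x))"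
      by (simp add: A(2))
    have "cinner (Rb *v y) (\<sigma> *v (Rb *v y)) = cinner y ((Rb ** \<sigma> ** Rb) *v y)"
      by (simp add: cinner_matrix_left B(3) matrix_vector_mul_assoc matrix_mul_assoc)
    then have Rb_form: "Re (cinner (Rb *v y) (\<sigma> *v (Rb *v y))) = Re (cinner y (Pb *v y))"
      by (simp add: B(2))
    have "cinner x ((Ra ** X ** Rb) *v y) = cinner (Ra *v x) (X *v (Rb *v y))"
      by (simp add: cinner_matrix_left A(3) matrix_vector_mul_assoc matrix_mul_assoc)
    then have "cmod (cinner x ((Ra ** X ** Rb) *v y)) ^ 2 \<le> Re (cinner x (Pa *v x)) * Re (cinner y (Pb *v y))"
      using block_psd_cauchy_schwarz [OF bp, of "Ra *v x" "Rb *v y"] by (simp add: Ra_form Rb_form)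
    also have "\<dots> \<le> norm x ^ 2 * norm y ^ 2"
      using A(6) B(5) psd_form_nonneg [OF s, of "Rb *v y"] Rb_form
      by (intro mult_mono) auto
    finally have "cmod (cinner x ((Ra ** X ** Rb) *v y)) ^ 2 \<le> (norm x * norm y) ^ 2"
      by (simp add: power_mult_distrib)
    then show "cmod (cinner x ((Ra ** X ** Rb) *v y)) \<le> norm x * norm y"
      by (rule power2_le_imp_le) simp
  qed
  ultimately show ?thesis
    using that by blast
qed

lemma Re_trace_contraction_mult_le:
  fixes K Z :: "complex^'n::finite^'n"
  assumes "contraction K"
  shows "Re (trace (K ** Z)) \<le> Re (trace (msqrt (adj Z ** Z)))"
proof -
  define S where "S = msqrt (adj Z ** Z)"
  obtain W where W: "unitary W" "Z = W ** S"
    using polar_decomposition [of Z] by (auto simp: S_def)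
  obtain V c where V: "unitary V" "\<forall>j. c j \<ge> 0" "S = diag_in V (\<lambda>j. of_real (c j))"
    using psd_unitary_diagonalisation [OF psd_msqrt [OF psd_adj_mult_self [of Z]]] by (auto simp: S_def)
  define G where "G = adj V ** (K ** W) ** V"
  have "trace (K ** Z) = trace (adj V ** (K ** W ** V ** diag_mat (\<lambda>j. of_real (c j))))"
    by (simp add: W(2) V(3) diag_in_def matrix_mul_assoc trace_mul_sym [of _ "adj V"])
  also have "\<dots> = trace (G ** diag_mat (\<lambda>j. of_real (c j)))"
    by (simp add: G_def matrix_mul_assoc)
  also have "\<dots> = (\<Sum>j\<in>UNIV. G $ j $ j * of_real (c j))"
    by (simp add: trace_def matrix_mult_diag_mat)
  finally have "Re (trace (K ** Z)) = (\<Sum>j\<in>UNIV. Re (G $ j $ j) * c j)"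
    by (simp add: Re_sum)
  also have "\<dots> \<le> (\<Sum>j\<in>UNIV. c j)"
  proof (intro sum_mono)
    fix j
    have "G $ j $ j = cinner (V *v axis j 1) ((K ** W) *v (V *v axis j 1))"
      using sandwich_diagonal_entry [of "adj V" "K ** W" "adj V" j] by (simp add: G_def)
    also have "\<dots> = cinner (V *v axis j 1) (K *v ((W ** V) *v axis j 1))"
      by (simp add: matrix_vector_mul_assoc matrix_mul_assoc)
    finally have "G $ j $ j = cinner (V *v axis j 1) (K *v ((W ** V) *v axis j 1))" .
    then have "cmod (G $ j $ j) \<le> 1"
      using assms norm_unitary_axis [OF V(1)] norm_unitary_axis [OF unitary_mult [OF W(1) V(1)]]
      by (metis contraction_def mult_1)
    then have "Re (G $ j $ j) \<le> 1"
      using complex_Re_le_cmod order_trans by blast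
    then show "Re (G $ j $ j) * c j \<le> c j"
      using V(2) mult_right_mono [of "Re (G $ j $ j)" 1 "c j"] by simp
  qed
  also have "\<dots> = Re (trace S)"
    by (simp add: V(3) trace_diag_in [OF V(1)] Re_sum)
  finally show ?thesis
    by (simp add: S_def)
qed

lemma block_psd_Re_trace_le_sqrt_fidelity:
  assumes "psd \<rho>" "psd \<sigma>" "block_psd \<rho> X \<sigma>"
  shows "Re (trace X) \<le> sqrt_fidelity \<rho> \<sigma>"
proof -
  obtain K where K: "X = msqrt \<rho> ** K ** msqrt \<sigma>" "contraction K"
    using block_psd_contraction_factor [OF assms] by blast
  then have "trace X = trace (K ** (msqrt \<sigma> ** msqrt \<rho>))"
    by (metis matrix_mul_assoc trace_mul_sym)
  with Re_trace_contraction_mult_le [OF K(2), of "msqrt \<sigma> ** msqrt \<rho>"] show ?thesis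
    by (simp add: adj_mult_self_msqrt_mult_msqrt assms sqrt_fidelity_def)
qed

lemma Re_trace_kraus_pair_le_sqrt_fidelity:
  assumes "psd \<rho>" "psd \<sigma>" "block_psd \<rho> X \<sigma>"
  shows "Re (trace (A1 ** X ** adj B1 + A2 ** X ** adj B2))
    \<le> sqrt_fidelity (A1 ** \<rho> ** adj A1 + A2 ** \<rho> ** adj A2) (B1 ** \<sigma> ** adj B1 + B2 ** \<sigma> ** adj B2)"
  using assms
  by (intro block_psd_Re_trace_le_sqrt_fidelity psd_add psd_sandwich block_psd_add block_psd_sandwich)

section \<open>Mixing with a self-adjoint involution\<close>

definition mix_channel :: "complex^'n^'n \<Rightarrow> real \<Rightarrow> complex^'n^'n \<Rightarrow> complex^'n^'n" where
  "mix_channel Q p \<rho> = (1 - p) *\<^sub>R \<rho> + p *\<^sub>R (Q ** \<rho> ** adj Q)"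

lemma trace_sandwich: "trace (A ** M ** adj A) = trace (adj A ** A ** M)"
  by (metis matrix_mul_assoc trace_mul_sym)

lemma mix_channel_kraus:
  assumes "0 \<le> p" "p \<le> 1"
  shows "mix_channel Q p \<rho> = (sqrt (1 - p) *\<^sub>R mat 1) ** \<rho> ** adj (sqrt (1 - p) *\<^sub>R mat 1)
    + (sqrt p *\<^sub>R Q) ** \<rho> ** adj (sqrt p *\<^sub>R Q)"
  using assms
  by (simp add: mix_channel_def adj_scaleR scaleR_matrix_mult matrix_mult_scaleR
      flip: real_sqrt_mult)

lemma kraus_pair_rotation:
  fixes K1 K2 M :: "complex^'n^'n"
  assumes "c^2 + s^2 = 1"
  shows "(c *\<^sub>R K1 - s *\<^sub>R K2) ** M ** adj (c *\<^sub>R K1 - s *\<^sub>R K2)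
       + (s *\<^sub>R K1 + c *\<^sub>R K2) ** M ** adj (s *\<^sub>R K1 + c *\<^sub>R K2)
     = K1 ** M ** adj K1 + K2 ** M ** adj K2"
proof -
  have "(c *\<^sub>R K1 - s *\<^sub>R K2) ** M ** adj (c *\<^sub>R K1 - s *\<^sub>R K2)
       + (s *\<^sub>R K1 + c *\<^sub>R K2) ** M ** adj (s *\<^sub>R K1 + c *\<^sub>R K2)
     = (c^2 + s^2) *\<^sub>R (K1 ** M ** adj K1) + (c^2 + s^2) *\<^sub>R (K2 ** M ** adj K2)"
    by (simp add: adj_add adj_diff adj_scaleR matrix_add_ldistrib matrix_add_rdistrib
        matrix_diff_ldistrib matrix_diff_rdistrib scaleR_matrix_mult matrix_mult_scaleR
        scaleR_add_left power2_eq_square algebra_simps)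
  with assms show ?thesis
    by simp
qed

lemma trace_rotated_kraus_pair:
  fixes Q X :: "complex^'n^'n" and \<alpha> \<beta> \<gamma> \<delta> :: real
  assumes Q: "adj Q = Q" "Q ** Q = mat 1"
  defines "C \<equiv> \<alpha> * \<gamma> + \<beta> * \<delta>" and "S \<equiv> \<beta> * \<gamma> - \<alpha> * \<delta>"
  shows "trace ((\<alpha> *\<^sub>R mat 1) ** X ** adj (C *\<^sub>R (\<gamma> *\<^sub>R mat 1) - S *\<^sub>R (\<delta> *\<^sub>R Q))
      + (\<beta> *\<^sub>R Q) ** X ** adj (S *\<^sub>R (\<gamma> *\<^sub>R mat 1) + C *\<^sub>R (\<delta> *\<^sub>R Q)))
    = of_real (C^2) * trace X + of_real (S^2) * trace (Q ** X)"
proof -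
  have "trace (X ** Q) = trace (Q ** X)"
    by (rule trace_mul_sym)
  moreover have "trace (Q ** X ** Q) = trace X"
    using trace_mul_sym [of "Q ** X" Q] Q(2) by (simp add: matrix_mul_assoc)
  ultimately have "trace ((\<alpha> *\<^sub>R mat 1) ** X ** adj (C *\<^sub>R (\<gamma> *\<^sub>R mat 1) - S *\<^sub>R (\<delta> *\<^sub>R Q))
      + (\<beta> *\<^sub>R Q) ** X ** adj (S *\<^sub>R (\<gamma> *\<^sub>R mat 1) + C *\<^sub>R (\<delta> *\<^sub>R Q)))
    = of_real (C * (\<alpha> * \<gamma> + \<beta> * \<delta>)) * trace X + of_real (S * (\<beta> * \<gamma> - \<alpha> * \<delta>)) * trace (Q ** X)"
    by (simp add: Q(1) adj_add adj_diff adj_scaleR matrix_add_ldistrib matrix_diff_ldistrib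
        scaleR_matrix_mult matrix_mult_scaleR trace_add trace_sub trace_scaleR algebra_simps)
  then show ?thesis
    by (simp add: C_def S_def power2_eq_square)
qed

lemma sqrt_fidelity_mix_channel_ge:
  fixes Q \<rho> \<sigma> X :: "complex^'n::finite^'n"
  assumes Q: "adj Q = Q" "Q ** Q = mat 1" and p: "0 \<le> p" "p \<le> 1" and q: "0 \<le> q" "q \<le> 1"
    and r: "psd \<rho>" and s: "psd \<sigma>" and X: "block_psd \<rho> X \<sigma>"
  shows "Re (trace X) - (sqrt p * sqrt (1 - q) - sqrt (1 - p) * sqrt q)^2 * Re (trace X - trace (Q ** X))
    \<le> sqrt_fidelity (mix_channel Q p \<rho>) (mix_channel Q q \<sigma>)"
proof -
  \<comment> \<open>With \<open>p = sin\<^sup>2 \<theta>\<close> and \<open>q = sin\<^sup>2 \<phi>\<close>, the Kraus pair \<open>(cos \<phi>, sin \<phi> Q)\<close> of the second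
    channel is rotated by \<open>\<theta> - \<phi>\<close> to line up with \<open>(cos \<theta>, sin \<theta> Q)\<close>; then \<open>S = sin (\<theta> - \<phi>)\<close>.\<close>
  define \<alpha> \<beta> \<gamma> \<delta> where "\<alpha> = sqrt (1 - p)" and "\<beta> = sqrt p" and "\<gamma> = sqrt (1 - q)" and "\<delta> = sqrt q"
  define C S where "C = \<alpha> * \<gamma> + \<beta> * \<delta>" and "S = \<beta> * \<gamma> - \<alpha> * \<delta>"
  define I :: "complex^'n^'n" where "I = mat 1"
  define A1 A2 B1 B2 where "A1 = \<alpha> *\<^sub>R I" and "A2 = \<beta> *\<^sub>R Q"
    and "B1 = C *\<^sub>R (\<gamma> *\<^sub>R I) - S *\<^sub>R (\<delta> *\<^sub>R Q)" and "B2 = S *\<^sub>R (\<gamma> *\<^sub>R I) + C *\<^sub>R (\<delta> *\<^sub>R Q)"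
  define X' where "X' = A1 ** X ** adj B1 + A2 ** X ** adj B2"
  have CS: "C^2 + S^2 = 1"
  proof -
    have "C^2 + S^2 = (\<alpha>^2 + \<beta>^2) * (\<gamma>^2 + \<delta>^2)"
      by (simp add: C_def S_def power2_eq_square algebra_simps)
    with p q show ?thesis
      by (simp add: \<alpha>_def \<beta>_def \<gamma>_def \<delta>_def)
  qed
  have \<rho>': "mix_channel Q p \<rho> = A1 ** \<rho> ** adj A1 + A2 ** \<rho> ** adj A2"
    using mix_channel_kraus [OF p] by (simp add: A1_def A2_def I_def \<alpha>_def \<beta>_def)
  have \<sigma>': "mix_channel Q q \<sigma> = B1 ** \<sigma> ** adj B1 + B2 ** \<sigma> ** adj B2"
    unfolding B1_def B2_def kraus_pair_rotation [OF CS] using mix_channel_kraus [OF q]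
    by (simp add: I_def \<gamma>_def \<delta>_def)
  have "Re (trace X') \<le> sqrt_fidelity (mix_channel Q p \<rho>) (mix_channel Q q \<sigma>)"
    unfolding \<rho>' \<sigma>' X'_def by (rule Re_trace_kraus_pair_le_sqrt_fidelity [OF r s X])
  moreover have "Re (trace X') = Re (trace X) - S^2 * Re (trace X - trace (Q ** X))"
  proof -
    have "trace X' = of_real (C^2) * trace X + of_real (S^2) * trace (Q ** X)"
      unfolding X'_def A1_def A2_def B1_def B2_def C_def S_def I_def
      by (rule trace_rotated_kraus_pair [OF Q])
    also have "\<dots> = (of_real (C^2 + S^2)) * trace X - of_real (S^2) * (trace X - trace (Q ** X))"
      by (simp add: algebra_simps)
    also have "\<dots> = trace X - of_real (S^2) * (trace X - trace (Q ** X))"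
      by (simp add: CS)
    finally show ?thesis
      by simp
  qed
  ultimately show ?thesis
    by (simp add: S_def \<alpha>_def \<beta>_def \<gamma>_def \<delta>_def)
qed

lemma trace_involution_gap_le:
  fixes P Q X \<rho> \<sigma> :: "complex^'n::finite^'n"
  assumes X: "block_psd \<rho> X \<sigma>" and P: "adj P = P" "P ** P = P"
    and Q: "adj Q = Q" "Q ** Q = mat 1" and PQ: "P ** (mat 1 - Q) = mat 1 - Q"
  shows "cmod (trace X - trace (Q ** X)) \<le> 2 * sqrt (Re (trace (P ** \<rho>)) * Re (trace (P ** \<sigma>)))"
proof -
  define g where "g = sqrt (Re (trace (P ** \<rho>)) * Re (trace (P ** \<sigma>)))"
  have "(mat 1 - Q) ** P = mat 1 - Q"
    using arg_cong [OF PQ, of adj] by (simp add: adj_mult adj_diff P(1) Q(1))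
  then have "Q ** P = P - (mat 1 - Q)"
    by (simp add: matrix_diff_rdistrib algebra_simps)
  moreover have "P ** Q = P - (mat 1 - Q)"
    using PQ by (simp add: matrix_diff_ldistrib algebra_simps)
  ultimately have QP: "Q ** P = P ** Q"
    by simp
  have "adj (P ** Q) ** (P ** Q) = Q ** (P ** P) ** Q"
    by (simp add: adj_mult P(1) Q(1) matrix_mul_assoc)
  also have "\<dots> = P ** (Q ** Q)"
    by (simp add: P(2) QP matrix_mul_assoc)
  finally have PQQP: "adj (P ** Q) ** (P ** Q) = P"
    by (simp add: Q(2))
  have trP: "trace (P ** M ** adj P) = trace (P ** M)" for M
    using trace_sandwich [of P M] by (simp add: P)
  have "trace X - trace (Q ** X) = trace (P ** (mat 1 - Q) ** X)"
    by (simp add: PQ matrix_diff_rdistrib trace_sub)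
  also have "\<dots> = trace (P ** X ** adj P) - trace ((P ** Q) ** X ** adj P)"
    using trP [of X] trP [of "Q ** X"]
    by (simp add: matrix_diff_ldistrib matrix_diff_rdistrib trace_sub matrix_mul_assoc)
  finally have "cmod (trace X - trace (Q ** X))
      \<le> cmod (trace (P ** X ** adj P)) + cmod (trace ((P ** Q) ** X ** adj P))"
    by (simp add: norm_triangle_ineq4)
  moreover have "cmod (trace (P ** X ** adj P)) \<le> g"
    using block_psd_trace_cauchy_schwarz [OF X, of P P]
    by (simp add: g_def trP real_le_rsqrt)
  moreover have "cmod (trace ((P ** Q) ** X ** adj P)) \<le> g"
    using block_psd_trace_cauchy_schwarz [OF X, of "P ** Q" P]
    by (simp add: g_def trP trace_sandwich [of "P ** Q"] PQQP real_le_rsqrt)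
  ultimately show ?thesis
    by (simp add: g_def)
qed

lemma sin_angle_difference_sq_le:
  fixes \<eta> p q :: real
  assumes "0 < \<eta>" "\<eta> < 1" "\<eta> \<le> p" "p \<le> 1 - \<eta>" "\<eta> \<le> q" "q \<le> 1 - \<eta>"
  shows "(sqrt p * sqrt (1 - q) - sqrt (1 - p) * sqrt q)^2 \<le> (p - q)^2 / (2 * (\<eta> * (1 - \<eta>)))"
proof -
  define S T where "S = sqrt p * sqrt (1 - q) - sqrt (1 - p) * sqrt q"
    and "T = sqrt p * sqrt (1 - q) + sqrt (1 - p) * sqrt q"
  have pq: "0 \<le> p" "p \<le> 1" "0 \<le> q" "q \<le> 1"
    using assms by auto
  have "S * T = p - q"
    using pq by (simp add: S_def T_def algebra_simps flip: power2_eq_square)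
  have "p * (1 - q) + (1 - p) * q \<le> T^2"
    using pq by (simp add: T_def power2_eq_square algebra_simps real_sqrt_mult)
  moreover have "2 * (\<eta> * (1 - \<eta>)) \<le> p * (1 - q) + (1 - p) * q"
  proof -
    have "0 \<le> (p - \<eta>) * (1 - \<eta> - q) + (q - \<eta>) * (1 - \<eta> - p)"
      using assms by (intro add_nonneg_nonneg mult_nonneg_nonneg) auto
    then show ?thesis
      by (simp add: algebra_simps)
  qed
  ultimately have "S^2 * (2 * (\<eta> * (1 - \<eta>))) \<le> S^2 * T^2"
    by (intro mult_left_mono) auto
  also have "\<dots> = (p - q)^2"
    by (simp add: \<open>S * T = p - q\<close> flip: power_mult_distrib)
  finally show ?thesis
    using assms(1,2) by (simp add: S_def field_simps)
qed

theorem sqrt_fidelity_mix_channel_lower_bound: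
  fixes P Q \<rho> \<sigma> :: "complex^'n::finite^'n" and \<eta> p q :: real
  assumes P: "adj P = P" "P ** P = P" and Q: "adj Q = Q" "Q ** Q = mat 1"
    and PQ: "P ** (mat 1 - Q) = mat 1 - Q"
    and \<eta>: "0 < \<eta>" "\<eta> < 1" "\<eta> \<le> p" "p \<le> 1 - \<eta>" "\<eta> \<le> q" "q \<le> 1 - \<eta>"
    and r: "psd \<rho>" and s: "psd \<sigma>"
  shows "sqrt_fidelity \<rho> \<sigma> - (p - q)^2 / (\<eta> * (1 - \<eta>)) * sqrt (Re (trace (P ** \<rho>)) * Re (trace (P ** \<sigma>)))
    \<le> sqrt_fidelity (mix_channel Q p \<rho>) (mix_channel Q q \<sigma>)"
proof -
  define s where "s = sqrt p * sqrt (1 - q) - sqrt (1 - p) * sqrt q"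
  define g where "g = sqrt (Re (trace (P ** \<rho>)) * Re (trace (P ** \<sigma>)))"
  obtain X where X: "block_psd \<rho> X \<sigma>" "Re (trace X) = sqrt_fidelity \<rho> \<sigma>"
    using sqrt_fidelity_witness [OF r s] by blast
  have "sqrt_fidelity \<rho> \<sigma> - s^2 * Re (trace X - trace (Q ** X))
      \<le> sqrt_fidelity (mix_channel Q p \<rho>) (mix_channel Q q \<sigma>)"
    using sqrt_fidelity_mix_channel_ge [OF Q _ _ _ _ r s X(1), of p q] \<eta> by (simp add: X(2) s_def)
  moreover have "s^2 * Re (trace X - trace (Q ** X)) \<le> (p - q)^2 / (\<eta> * (1 - \<eta>)) * g"
  proof -
    have "cmod (trace X - trace (Q ** X)) \<le> 2 * g"
      unfolding g_def by (rule trace_involution_gap_le [OF X(1) P Q PQ])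
    then have "Re (trace X - trace (Q ** X)) \<le> 2 * g" and "0 \<le> 2 * g"
      using complex_Re_le_cmod order_trans norm_ge_zero by blast+
    then have "s^2 * Re (trace X - trace (Q ** X)) \<le> s^2 * (2 * g)"
      by (simp add: mult_left_mono)
    also have "\<dots> \<le> (p - q)^2 / (2 * (\<eta> * (1 - \<eta>))) * (2 * g)"
      using sin_angle_difference_sq_le [OF \<eta>, folded s_def] \<open>0 \<le> 2 * g\<close>
      by (rule mult_right_mono)
    finally show ?thesis
      by simp
  qed
  ultimately show ?thesis
    by (simp add: g_def)
qed

section \<open>Controlled operators\<close>

definition block_diag :: "('a::finite \<Rightarrow> complex^'r::finite^'r) \<Rightarrow> complex^('a \<times> 'r)^('a \<times> 'r)" where
  "block_diag M = (\<chi> a b. if fst a = fst b then M (fst a) $ snd a $ snd b else 0)"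

lemma block_diag_mult: "block_diag M ** block_diag N = block_diag (\<lambda>j. M j ** N j)"
proof -
  have "(\<Sum>c\<in>UNIV. (if fst a = fst c then M (fst a) $ snd a $ snd c else 0) *
          (if fst c = fst b then N (fst c) $ snd c $ snd b else 0)) =
        (if fst a = fst b then (M (fst a) ** N (fst a)) $ snd a $ snd b else 0)" for a b :: "'a \<times> 'b"
  proof -
    have pair: "(\<Sum>c\<in>UNIV. f c) = (\<Sum>c1\<in>UNIV. \<Sum>c2\<in>UNIV. f (c1, c2))" for f :: "'a \<times> 'b \<Rightarrow> complex"
      by (simp add: sum.cartesian_product)
    have eq: "(\<lambda>c1. \<Sum>c2\<in>UNIV. (if fst a = c1 then M (fst a) $ snd a $ c2 else 0) *
          (if c1 = fst b then N c1 $ c2 $ snd b else 0)) =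
        (\<lambda>c1. if c1 = fst a then (if fst a = fst b then (M (fst a) ** N (fst a)) $ snd a $ snd b else 0) else 0)"
      by (rule ext) (auto simp: matrix_matrix_mult_def)
    show ?thesis
      unfolding pair fst_conv snd_conv eq by simp
  qed
  then show ?thesis
    by (simp add: block_diag_def matrix_matrix_mult_def vec_eq_iff)
qed

lemma adj_block_diag: "adj (block_diag M) = block_diag (\<lambda>j. adj (M j))"
  by (auto simp: block_diag_def vec_eq_iff)

lemma block_diag_diff: "block_diag M - block_diag N = block_diag (\<lambda>j. M j - N j)"
  by (auto simp: block_diag_def vec_eq_iff)

lemma block_diag_1: "block_diag (\<lambda>_. mat 1) = mat 1"
  by (auto simp: block_diag_def vec_eq_iff mat_def prod_eq_iff)

lemma ctrl_op_eq_block_diag: "ctrl_op i U = block_diag (\<lambda>j. if j = i then U else mat 1)"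
  by (auto simp: block_diag_def ctrl_op_def vec_eq_iff mat_def)

lemma proj_i_eq_block_diag: "proj_i i = block_diag (\<lambda>j. if j = i then mat 1 else 0)"
  by (auto simp: block_diag_def proj_i_def vec_eq_iff mat_def)

lemma ctrl_op_square:
  assumes "unitary U" "hermitian (ctrl_op i U)"
  shows "ctrl_op i U ** ctrl_op i U = mat 1"
proof -
  have "ctrl_op i U ** adj (ctrl_op i U) = mat 1"
    unfolding ctrl_op_eq_block_diag adj_block_diag block_diag_mult
    using assms(1) by (simp add: unitary_def block_diag_1 [symmetric] if_distrib cong: if_cong)
  with assms(2) show ?thesis
    by (simp add: hermitian_def)
qed

lemma adj_proj_i: "adj (proj_i i) = proj_i i"
  unfolding proj_i_eq_block_diag adj_block_diag by (rule arg_cong [where f = block_diag]) auto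

lemma proj_i_idem: "proj_i i ** proj_i i = proj_i i"
  unfolding proj_i_eq_block_diag block_diag_mult by (rule arg_cong [where f = block_diag]) auto

lemma proj_i_mult_1_minus_ctrl_op: "proj_i i ** (mat 1 - ctrl_op i U) = mat 1 - ctrl_op i U"
  unfolding proj_i_eq_block_diag ctrl_op_eq_block_diag block_diag_1 [symmetric] block_diag_diff
    block_diag_mult
  by (rule arg_cong [where f = block_diag]) (auto simp: matrix_diff_ldistrib)

theorem lemma1:
  fixes i :: "'a::finite"
    and U :: "complex^'r::finite^'r"
    and \<eta> p q :: real
    and \<rho> \<sigma> :: "complex^('a \<times> 'r)^('a \<times> 'r)"
  assumes "unitary U"
    and "hermitian (ctrl_op i U)"
    and "0 < \<eta>" and "\<eta> < 1"
    and "density \<rho>" and "density \<sigma>"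
    and "\<eta> \<le> p" and "p \<le> 1 - \<eta>"
    and "\<eta> \<le> q" and "q \<le> 1 - \<eta>"
  shows "sqrt_fidelity (chan i U p \<rho>) (chan i U q \<sigma>)
           \<ge> sqrt_fidelity \<rho> \<sigma>
              - (p - q)^2 / (\<eta> * (1 - \<eta>))
                * sqrt (Re (trace (proj_i i ** \<rho>)) * Re (trace (proj_i i ** \<sigma>)))"
proof -
  have "adj (ctrl_op i U) = ctrl_op i U" "ctrl_op i U ** ctrl_op i U = mat 1"
    using assms(1,2) by (simp_all add: hermitian_def ctrl_op_square)
  moreover have "psd \<rho>" "psd \<sigma>"
    using assms(5,6) by (simp_all add: density_def)
  ultimately have "sqrt_fidelity (mix_channel (ctrl_op i U) p \<rho>) (mix_channel (ctrl_op i U) q \<sigma>)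
      \<ge> sqrt_fidelity \<rho> \<sigma> - (p - q)^2 / (\<eta> * (1 - \<eta>))
        * sqrt (Re (trace (proj_i i ** \<rho>)) * Re (trace (proj_i i ** \<sigma>)))"
    by (intro sqrt_fidelity_mix_channel_lower_bound adj_proj_i proj_i_idem
        proj_i_mult_1_minus_ctrl_op assms(3,4,7-10))
  then show ?thesis
    by (simp only: chan_def mix_channel_def)
qed

end
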